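(* Let $\beta>0$, $\gamma>0$, $\mu:=\beta\gamma^2$, and let $n'=n'(n)$, $n''=n''(n)$ be positive integers with $n'\le\lfloor\beta n\rfloor$, $n'/n=\beta+o(1)$, $n''\le n$, $n''/n=1+o(1)$. Let $\delta>0$. Then there exist a constant $C=C(\beta,\gamma,\delta)>0$ and $N_0$ such that for all $n\ge N_0$ and all integers $k\ge1$, if $\tilde X=\tilde X_1+\cdots+\tilde X_k$ where $\tilde X_1,\dots,\tilde X_k$ are i.i.d. with the law of $D(n',n'',\gamma/n)$, then $$\mathbb{P}(\tilde X\ge(1+\delta)\mu k)\le e^{-Ck}\quad\text{and}\quad \mathbb{P}(\tilde X\le(1-\delta)\mu k)\le e^{-Ck}.$$
   Context: For integers $m\ge0$, $N\ge1$ and $p\in[0,1]$, let $\mathcal{G}^{(N)}_{m,p}$ be the random intersection graph with $N$ vertices and $m$ auxiliary vertices: each of the $Nm$ vertex–auxiliary-vertex pairs is joined independently with probability $p$, and two distinct vertices are adjacent iff they share an auxiliary neighbour. $D(m,N,p)$ denotes a random variable distributed as the degree of a uniformly chosen vertex of $\mathcal{G}^{(N)}_{m,p}$; its generating function is $\mathbb{E}[z^{D(m,N,p)}]=\sum_{j=0}^{N-1}\binom{N-1}{j}z^j(1-z)^{N-1-j}[1-p+p(1-p)^{N-1-j}]^m$. *)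

theory Defs
  imports "HOL-Probability.Probability"
begin

text \<open>Random intersection graph with vertices 0..N-1 and auxiliary vertices 0..m-1.
  A sample is an indicator function on pairs (vertex, auxiliary vertex), each pair
  present independently with probability p.\<close>

definition rig_edges :: "nat \<Rightarrow> nat \<Rightarrow> real \<Rightarrow> (nat \<times> nat \<Rightarrow> bool) pmf" where
  "rig_edges m N p = Pi_pmf ({..<N} \<times> {..<m}) False (\<lambda>_. bernoulli_pmf p)"

definition rig_adj :: "nat \<Rightarrow> (nat \<times> nat \<Rightarrow> bool) \<Rightarrow> nat \<Rightarrow> nat \<Rightarrow> bool" where
  "rig_adj m G u v \<longleftrightarrow> u \<noteq> v \<and> (\<exists>a<m. G (u, a) \<and> G (v, a))"

definition rig_degree :: "nat \<Rightarrow> nat \<Rightarrow> (nat \<times> nat \<Rightarrow> bool) \<Rightarrow> nat \<Rightarrow> nat" where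
  "rig_degree m N G v = card {w \<in> {..<N}. rig_adj m G v w}"

text \<open>D(m,N,p): degree of a uniformly chosen vertex of G^(N)_{m,p} (N \<ge> 1).\<close>
definition D_pmf :: "nat \<Rightarrow> nat \<Rightarrow> real \<Rightarrow> nat pmf" where
  "D_pmf m N p =
     bind_pmf (rig_edges m N p) (\<lambda>G.
       map_pmf (\<lambda>v. rig_degree m N G v) (pmf_of_set {..<N}))"

definition iid_sum_pmf :: "nat \<Rightarrow> nat pmf \<Rightarrow> nat pmf" where
  "iid_sum_pmf k P = map_pmf (\<lambda>f. \<Sum>i<k. f i) (Pi_pmf {..<k} 0 (\<lambda>_. P))"


end

theory Submission
  imports Defs
begin

(* With mu = beta gamma^2 and p = gamma/n, the proof is a Chernoff bound for i.i.d. sums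
   (lemma iid_sum_pmf_tail), so it suffices to bound exponential moments of D(m,N,p),
   the average over the vertices v of the law of deg v.

   Upper tail: deg v is at most the number of pairs (w, a), w ~= v, such that v and w
   both choose the auxiliary vertex a; given the choices of v these indicators are
   independent, whence E[exp (t deg v)] <= exp (Phi t) with
   Phi t = beta gamma (exp (gamma (e^t - 1)) - 1).  As Phi'(0) = mu, a small t > 0 works.
   Lower tail: exp (-y) <= 1 - y + y^2/2 bounds E[exp (-t deg v)] through the mean
   (N-1)(1 - (1-p^2)^m), which tends to mu, and the second moment <= 2 exp (Phi 1).

   Both tail bounds hold uniformly for parameters in the predicate sparse_regime, and the
   parameters of the theorem are eventually in that regime. *)


section \<open>General facts about finite probability mass functions\<close>

lemma finite_set_Pi_pmf:
  assumes "finite A" "\<And>x. x \<in> A \<Longrightarrow> finite (set_pmf (P x))"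
  shows "finite (set_pmf (Pi_pmf A d P))"
  using assms by (intro finite_subset[OF set_Pi_pmf_subset'[OF assms(1)]] finite_PiE_dflt) auto

lemma expectation_pair_pmf:
  fixes f :: "'a \<times> 'b \<Rightarrow> real"
  assumes "finite (set_pmf A)" "finite (set_pmf B)"
  shows "measure_pmf.expectation (pair_pmf A B) f =
         measure_pmf.expectation A (\<lambda>a. measure_pmf.expectation B (\<lambda>b. f (a, b)))"
proof -
  have "measure_pmf.expectation (pair_pmf A B) f =
        (\<Sum>a\<in>set_pmf A. pmf A a *\<^sub>R measure_pmf.expectation (map_pmf (Pair a) B) f)"
    unfolding pair_pmf_def
    by (subst pmf_expectation_bind[of "set_pmf A"]) (auto simp: assms map_pmf_def[symmetric])
  also have "\<dots> = measure_pmf.expectation A (\<lambda>a. measure_pmf.expectation B (\<lambda>b. f (a, b)))"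
    by (subst integral_measure_pmf[of "set_pmf A"]) (auto simp: assms)
  finally show ?thesis .
qed

lemma expectation_prod_Pi_bernoulli:
  fixes h :: "'a \<Rightarrow> bool \<Rightarrow> real"
  assumes "finite A" "0 \<le> p" "p \<le> 1" "\<And>x b. h x b \<ge> 0"
  shows "measure_pmf.expectation (Pi_pmf A False (\<lambda>_. bernoulli_pmf p)) (\<lambda>G. \<Prod>x\<in>A. h x (G x))
         = (\<Prod>x\<in>A. h x True * p + h x False * (1 - p))"
  by (subst expectation_prod_Pi_pmf) (auto simp: assms integrable_measure_pmf_finite)

lemma prob_le_expectation:
  fixes g :: "'a \<Rightarrow> real"
  assumes "finite (set_pmf M)" "\<And>x. g x \<ge> 0" "\<And>x. x \<in> S \<Longrightarrow> g x \<ge> 1"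
  shows "measure_pmf.prob M S \<le> measure_pmf.expectation M g"
proof -
  have "measure_pmf.prob M S = measure_pmf.expectation M (indicator S)"
    by simp
  also have "\<dots> \<le> measure_pmf.expectation M g"
    by (intro integral_mono) (auto simp: integrable_measure_pmf_finite assms indicator_def)
  finally show ?thesis .
qed

lemma finite_set_iid_sum_pmf: "finite (set_pmf P) \<Longrightarrow> finite (set_pmf (iid_sum_pmf k P))"
  unfolding iid_sum_pmf_def by (auto intro!: finite_set_Pi_pmf)

lemma expectation_exp_iid_sum_pmf:
  assumes "finite (set_pmf P)"
  shows "measure_pmf.expectation (iid_sum_pmf k P) (\<lambda>x. exp (t * real x)) =
         (measure_pmf.expectation P (\<lambda>x. exp (t * real x))) ^ k"
proof -
  have "measure_pmf.expectation (iid_sum_pmf k P) (\<lambda>x. exp (t * real x)) =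
     measure_pmf.expectation (Pi_pmf {..<k} 0 (\<lambda>_. P)) (\<lambda>f. \<Prod>i\<in>{..<k}. exp (t * real (f i)))"
    unfolding iid_sum_pmf_def by (simp add: exp_sum sum_distrib_left)
  also have "\<dots> = (measure_pmf.expectation P (\<lambda>x. exp (t * real x))) ^ k"
    by (subst expectation_prod_Pi_pmf) (auto simp: assms integrable_measure_pmf_finite)
  finally show ?thesis .
qed

text \<open>Chernoff bound for i.i.d. sums: the sign of \<open>t\<close> selects the tail.\<close>
lemma iid_sum_pmf_tail:
  assumes "finite (set_pmf P)"
    and "\<And>x. x \<in> S \<Longrightarrow> t * a * real k \<le> t * real x"
    and "measure_pmf.expectation P (\<lambda>x. exp (t * real x)) * exp (- t * a) \<le> exp (- C)"
  shows "measure_pmf.prob (iid_sum_pmf k P) S \<le> exp (- C * real k)"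
proof -
  let ?M = "measure_pmf.expectation P (\<lambda>x. exp (t * real x))"
  have M_nonneg: "?M \<ge> 0" by (intro integral_nonneg_AE) auto
  have "measure_pmf.prob (iid_sum_pmf k P) S
     \<le> measure_pmf.expectation (iid_sum_pmf k P) (\<lambda>x. exp (t * real x) * exp (- t * a * real k))"
  proof (rule prob_le_expectation[OF finite_set_iid_sum_pmf[OF assms(1)]])
    fix x assume "x \<in> S"
    hence "t * real x + (- t * a * real k) \<ge> 0" using assms(2) by simp
    thus "exp (t * real x) * exp (- t * a * real k) \<ge> 1"
      by (simp add: exp_add[symmetric])
  qed auto
  also have "\<dots> = ?M ^ k * exp (- t * a) ^ k"
    by (simp add: expectation_exp_iid_sum_pmf[OF assms(1)] exp_of_nat_mult[symmetric]
        mult.commute mult.left_commute)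
  also have "\<dots> = (?M * exp (- t * a)) ^ k" by (simp add: power_mult_distrib)
  also have "\<dots> \<le> exp (- C) ^ k"
    by (intro power_mono assms(3)) (use M_nonneg in auto)
  also have "\<dots> = exp (- C * real k)" by (simp add: exp_of_nat_mult[symmetric] mult.commute)
  finally show ?thesis .
qed

lemma exp_neg_le_quadratic:
  fixes y :: real
  assumes "y \<ge> 0"
  shows "exp (- y) \<le> 1 - y + y\<^sup>2 / 2"
proof -
  have "(\<lambda>z. 1 - z + z\<^sup>2 / 2 - exp (- z)) 0 \<le> (\<lambda>z. 1 - z + z\<^sup>2 / 2 - exp (- z)) y"
  proof (rule DERIV_nonneg_imp_nondecreasing[OF assms])
    fix x :: real
    have "1 + (- x) \<le> exp (- x)" by (rule exp_ge_add_one_self)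
    moreover have "DERIV (\<lambda>z. 1 - z + z\<^sup>2 / 2 - exp (- z)) x :> (- 1 + x + exp (- x))"
      by (auto intro!: derivative_eq_intros simp: power2_eq_square)
    ultimately show "\<exists>d. DERIV (\<lambda>z. 1 - z + z\<^sup>2 / 2 - exp (- z)) x :> d \<and> d \<ge> 0" by force
  qed
  thus ?thesis by simp
qed

lemma expectation_exp_neg_le:
  fixes f :: "'a \<Rightarrow> real"
  assumes "finite (set_pmf M)" "\<And>x. f x \<ge> 0" "t \<ge> 0"
    and "L \<le> measure_pmf.expectation M f" "measure_pmf.expectation M (\<lambda>x. (f x)\<^sup>2) \<le> K"
  shows "measure_pmf.expectation M (\<lambda>x. exp (- t * f x)) \<le> exp (- t * L + t\<^sup>2 / 2 * K)"
proof -
  let ?E = "measure_pmf.expectation M"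
  have int: "integrable M g" for g :: "'a \<Rightarrow> real"
    by (simp add: integrable_measure_pmf_finite assms(1))
  have "?E (\<lambda>x. exp (- t * f x)) \<le> ?E (\<lambda>x. 1 - t * f x + t\<^sup>2 / 2 * (f x)\<^sup>2)"
  proof (intro integral_mono int)
    fix x
    show "exp (- t * f x) \<le> 1 - t * f x + t\<^sup>2 / 2 * (f x)\<^sup>2"
      using exp_neg_le_quadratic[of "t * f x"] assms(2,3) by (simp add: power_mult_distrib)
  qed
  also have "\<dots> = 1 - t * ?E f + t\<^sup>2 / 2 * ?E (\<lambda>x. (f x)\<^sup>2)"
    by (simp add: int)
  also have "\<dots> \<le> 1 + (- t * L + t\<^sup>2 / 2 * K)"
    using mult_left_mono[OF assms(4,3)] mult_left_mono[OF assms(5), of "t\<^sup>2 / 2"] by simp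
  also have "\<dots> \<le> exp (- t * L + t\<^sup>2 / 2 * K)"
    by (rule exp_ge_add_one_self)
  finally show ?thesis .
qed


lemma sum_singleton_times:
  fixes g :: "'a \<times> 'b \<Rightarrow> real"
  shows "(\<Sum>x\<in>{v}\<times>M. g x) = (\<Sum>a\<in>M. g (v, a))"
proof -
  have "{v}\<times>M = Pair v ` M" by auto
  thus ?thesis by (simp add: sum.reindex inj_on_def)
qed

lemma prod_singleton_times:
  fixes g :: "'a \<times> 'b \<Rightarrow> real"
  shows "(\<Prod>x\<in>{v}\<times>M. g x) = (\<Prod>a\<in>M. g (v, a))"
proof -
  have "{v}\<times>M = Pair v ` M" by auto
  thus ?thesis by (simp add: prod.reindex inj_on_def)
qed

lemma sum_times_snd:
  fixes c :: "'b \<Rightarrow> real"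
  assumes "finite W" "finite M"
  shows "(\<Sum>x\<in>W\<times>M. c (snd x)) = real (card W) * (\<Sum>a\<in>M. c a)"
proof -
  have "(\<Sum>x\<in>W\<times>M. c (snd x)) = (\<Sum>w\<in>W. \<Sum>a\<in>M. c a)"
    by (subst sum.cartesian_product) (simp add: case_prod_unfold)
  thus ?thesis by simp
qed

lemma prod_times_row:
  fixes c :: real
  assumes "finite W" "finite M" "w \<in> W"
  shows "(\<Prod>x\<in>W\<times>M. if fst x = w \<and> Q (snd x) then c else 1) = (\<Prod>a\<in>M. if Q a then c else 1)"
proof -
  have "(\<Prod>x\<in>W\<times>M. if fst x = w \<and> Q (snd x) then c else 1) =
        (\<Prod>w'\<in>W. \<Prod>a\<in>M. if w' = w \<and> Q a then c else 1)"
    by (subst prod.cartesian_product) (simp add: case_prod_unfold)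
  also have "\<dots> = (\<Prod>w'\<in>W. if w' = w then (\<Prod>a\<in>M. if Q a then c else 1) else 1)"
    by (intro prod.cong refl) auto
  also have "\<dots> = (\<Prod>a\<in>M. if Q a then c else 1)" using assms by simp
  finally show ?thesis .
qed

lemma of_bool_all_less_eq_prod:
  "(of_bool (\<forall>a<(m::nat). \<not> Q a) :: real) = (\<Prod>a<m. if Q a then 0 else 1)"
  by (induction m) (auto simp: less_Suc_eq)


section \<open>The random intersection graph\<close>

lemma finite_set_rig_edges: "finite (set_pmf (rig_edges m N p))"
  unfolding rig_edges_def by (rule finite_set_Pi_pmf) auto

lemma rig_degree_le: "rig_degree m N G v \<le> N"
  unfolding rig_degree_def by (rule order.trans[OF card_mono[of "{..<N}"]]) auto

lemma finite_set_D_pmf: "finite (set_pmf (D_pmf m N p))"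
  unfolding D_pmf_def by (rule finite_subset[of _ "{..N}"]) (auto simp: rig_degree_le)

lemma expectation_D_pmf_le:
  fixes h :: "nat \<Rightarrow> real"
  assumes "N > 0"
    and "\<And>v. v < N \<Longrightarrow> measure_pmf.expectation (rig_edges m N p) (\<lambda>G. h (rig_degree m N G v)) \<le> B"
  shows "measure_pmf.expectation (D_pmf m N p) h \<le> B"
proof -
  have "measure_pmf.expectation (D_pmf m N p) h =
    (\<Sum>G\<in>set_pmf (rig_edges m N p). pmf (rig_edges m N p) G *\<^sub>R
        measure_pmf.expectation (map_pmf (\<lambda>v. rig_degree m N G v) (pmf_of_set {..<N})) h)"
    unfolding D_pmf_def using assms(1)
    by (subst pmf_expectation_bind[of "set_pmf (rig_edges m N p)"])
       (auto simp: finite_set_rig_edges lessThan_empty_iff)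
  also have "\<dots> = measure_pmf.expectation (rig_edges m N p)
       (\<lambda>G. (\<Sum>v<N. h (rig_degree m N G v)) / real N)"
    using assms(1) by (subst integral_measure_pmf[of "set_pmf (rig_edges m N p)"])
       (auto simp: finite_set_rig_edges integral_pmf_of_set lessThan_empty_iff)
  also have "\<dots> = (\<Sum>v<N. measure_pmf.expectation (rig_edges m N p) (\<lambda>G. h (rig_degree m N G v))) / real N"
    by (simp add: integrable_measure_pmf_finite finite_set_rig_edges)
  also have "\<dots> \<le> (\<Sum>v<N. B) / real N"
    by (intro divide_right_mono sum_mono assms(2)) auto
  also have "\<dots> = B" using assms(1) by simp
  finally show ?thesis .
qed

definition glue :: "'a set \<Rightarrow> ('a \<Rightarrow> 'b) \<times> ('a \<Rightarrow> 'b) \<Rightarrow> 'a \<Rightarrow> 'b"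
  where "glue A fg = (\<lambda>x. if x \<in> A then fst fg x else snd fg x)"

text \<open>The incidences of a fixed vertex \<open>v\<close> are independent of all other incidences, so
  expectations can be computed by first fixing the choices of \<open>v\<close>.\<close>
lemma expectation_rig_edges_split:
  fixes F :: "(nat \<times> nat \<Rightarrow> bool) \<Rightarrow> real"
  assumes "v < N"
  shows "measure_pmf.expectation (rig_edges m N p) F =
    measure_pmf.expectation (Pi_pmf ({v}\<times>{..<m}) False (\<lambda>_. bernoulli_pmf p)) (\<lambda>f.
    measure_pmf.expectation (Pi_pmf (({..<N}-{v})\<times>{..<m}) False (\<lambda>_. bernoulli_pmf p)) (\<lambda>g.
      F (glue ({v}\<times>{..<m}) (f, g))))"
proof -
  have rows: "{..<N} \<times> {..<m} = ({v}\<times>{..<m}) \<union> (({..<N}-{v})\<times>{..<m})" using assms by auto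
  have glue_eq: "glue ({v}\<times>{..<m}) = (\<lambda>(f,g) x. if x \<in> {v}\<times>{..<m} then f x else g x)"
    by (auto simp: glue_def fun_eq_iff)
  have "rig_edges m N p = map_pmf (glue ({v}\<times>{..<m}))
     (pair_pmf (Pi_pmf ({v}\<times>{..<m}) False (\<lambda>_. bernoulli_pmf p))
               (Pi_pmf (({..<N}-{v})\<times>{..<m}) False (\<lambda>_. bernoulli_pmf p)))"
    unfolding rig_edges_def rows glue_eq by (rule Pi_pmf_union) auto
  thus ?thesis by (simp add: expectation_pair_pmf finite_set_Pi_pmf)
qed

text \<open>Every neighbour \<open>w\<close> of \<open>v\<close> is witnessed by some common auxiliary vertex \<open>a\<close>.\<close>
lemma rig_degree_le_common_incidences:
  assumes "v < N"
  shows "real (rig_degree m N G v) \<le> (\<Sum>x\<in>({..<N}-{v})\<times>{..<m}. of_bool (G (v, snd x) \<and> G x))"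
proof -
  let ?T = "\<lambda>a. {w\<in>{..<N}-{v}. G (v, a) \<and> G (w, a)}"
  have "{w\<in>{..<N}. rig_adj m G v w} \<subseteq> (\<Union>a\<in>{..<m}. ?T a)"
    by (auto simp: rig_adj_def)
  hence "rig_degree m N G v \<le> card (\<Union>a\<in>{..<m}. ?T a)"
    unfolding rig_degree_def by (intro card_mono) auto
  also have "\<dots> \<le> (\<Sum>a<m. card (?T a))" by (rule card_UN_le) auto
  finally have "real (rig_degree m N G v) \<le> (\<Sum>a<m. real (card (?T a)))"
    by (simp add: of_nat_sum[symmetric] del: of_nat_sum)
  also have "\<dots> = (\<Sum>a<m. \<Sum>w\<in>{..<N}-{v}. of_bool (G (v, a) \<and> G (w, a)))"
    by (intro sum.cong refl) (simp add: Int_def)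
  also have "\<dots> = (\<Sum>w\<in>{..<N}-{v}. \<Sum>a<m. of_bool (G (v, a) \<and> G (w, a)))"
    by (rule sum.swap)
  also have "\<dots> = (\<Sum>x\<in>({..<N}-{v})\<times>{..<m}. of_bool (G (v, snd x) \<and> G x))"
    by (subst sum.cartesian_product) (simp add: case_prod_unfold del: sum_of_bool_eq)
  finally show ?thesis .
qed

text \<open>Given the incidences \<open>f\<close> of \<open>v\<close>, the common incidences are independent Bernoulli
  variables; their exponential moment is bounded via \<open>1 + x \<le> e\<^sup>x\<close>.\<close>
lemma common_incidences_mgf_given_row:
  fixes m N :: nat
  assumes "v < N" "0 \<le> p" "p \<le> 1" "t \<ge> 0"
  shows "measure_pmf.expectation (Pi_pmf (({..<N}-{v})\<times>{..<m}) False (\<lambda>_. bernoulli_pmf p))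
           (\<lambda>g. \<Prod>x\<in>({..<N}-{v})\<times>{..<m}. exp (t * of_bool (f (v, snd x) \<and> g x)))
         \<le> (\<Prod>x\<in>{v}\<times>{..<m}. exp (real (N - 1) * p * (exp (t * of_bool (f x)) - 1)))"
proof -
  define B where "B = ({..<N}-{v})\<times>{..<m}"
  have finB: "finite B" by (auto simp: B_def)
  have "measure_pmf.expectation (Pi_pmf B False (\<lambda>_. bernoulli_pmf p))
           (\<lambda>g. \<Prod>x\<in>B. exp (t * of_bool (f (v, snd x) \<and> g x)))
      = (\<Prod>x\<in>B. exp (t * of_bool (f (v, snd x))) * p + (1 - p))"
    by (subst expectation_prod_Pi_bernoulli) (auto simp: finB assms)
  also have "\<dots> \<le> (\<Prod>x\<in>B. exp (p * (exp (t * of_bool (f (v, snd x))) - 1)))"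
  proof (intro prod_mono conjI)
    fix x
    have "exp (t * of_bool (f (v, snd x))) \<ge> 1" using assms(4) by simp
    thus "0 \<le> exp (t * of_bool (f (v, snd x))) * p + (1 - p)" using assms(2,3)
      by (intro add_nonneg_nonneg mult_nonneg_nonneg) auto
    show "exp (t * of_bool (f (v, snd x))) * p + (1 - p) \<le> exp (p * (exp (t * of_bool (f (v, snd x))) - 1))"
      using exp_ge_add_one_self[of "p * (exp (t * of_bool (f (v, snd x))) - 1)"]
      by (simp add: algebra_simps)
  qed
  also have "\<dots> = exp (\<Sum>x\<in>B. p * (exp (t * of_bool (f (v, snd x))) - 1))"
    by (simp add: exp_sum[OF finB])
  also have "(\<Sum>x\<in>B. p * (exp (t * of_bool (f (v, snd x))) - 1)) =
        real (N - 1) * (\<Sum>a<m. p * (exp (t * of_bool (f (v, a))) - 1))"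
    unfolding B_def using assms(1)
    by (subst sum_times_snd[where c = "\<lambda>a. p * (exp (t * of_bool (f (v, a))) - 1)"]) auto
  also have "\<dots> = (\<Sum>x\<in>{v}\<times>{..<m}. real (N - 1) * p * (exp (t * of_bool (f x)) - 1))"
    by (subst sum_singleton_times) (simp add: sum_distrib_left mult.assoc)
  also have "exp \<dots> = (\<Prod>x\<in>{v}\<times>{..<m}. exp (real (N - 1) * p * (exp (t * of_bool (f x)) - 1)))"
    by (simp add: exp_sum)
  finally show ?thesis unfolding B_def .
qed

lemma rig_degree_mgf:
  assumes "v < N" "0 \<le> p" "p \<le> 1" "t \<ge> 0"
  shows "measure_pmf.expectation (rig_edges m N p) (\<lambda>G. exp (t * real (rig_degree m N G v)))
     \<le> (1 - p + p * exp (real (N - 1) * p * (exp t - 1))) ^ m"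
proof -
  define A where "A = {v}\<times>{..<m}"
  define B where "B = ({..<N}-{v})\<times>{..<m}"
  let ?PA = "Pi_pmf A False (\<lambda>_. bernoulli_pmf p)"
  let ?PB = "Pi_pmf B False (\<lambda>_. bernoulli_pmf p)"
  have finA: "finite A" and finB: "finite B" by (auto simp: A_def B_def)
  have "measure_pmf.expectation (rig_edges m N p) (\<lambda>G. exp (t * real (rig_degree m N G v)))
     \<le> measure_pmf.expectation (rig_edges m N p) (\<lambda>G. \<Prod>x\<in>B. exp (t * of_bool (G (v, snd x) \<and> G x)))"
  proof (intro integral_mono)
    fix G
    have "t * real (rig_degree m N G v) \<le> t * (\<Sum>x\<in>B. of_bool (G (v, snd x) \<and> G x))"
      unfolding B_def using rig_degree_le_common_incidences[OF assms(1)] assms(4)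
      by (intro mult_left_mono) auto
    thus "exp (t * real (rig_degree m N G v)) \<le> (\<Prod>x\<in>B. exp (t * of_bool (G (v, snd x) \<and> G x)))"
      by (simp add: exp_sum[OF finB, symmetric] sum_distrib_left del: sum_of_bool_eq)
  qed (auto simp: integrable_measure_pmf_finite finite_set_rig_edges)
  also have "\<dots> = measure_pmf.expectation ?PA (\<lambda>f. measure_pmf.expectation ?PB (\<lambda>g.
      \<Prod>x\<in>B. exp (t * of_bool (f (v, snd x) \<and> g x))))"
  proof -
    have "\<And>f g. (\<Prod>x\<in>B. exp (t * of_bool (glue A (f, g) (v, snd x) \<and> glue A (f, g) x))) =
                (\<Prod>x\<in>B. exp (t * of_bool (f (v, snd x) \<and> g x)))"
      by (intro prod.cong refl) (auto simp: glue_def A_def B_def)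
    thus ?thesis
      unfolding A_def B_def by (subst expectation_rig_edges_split[OF assms(1)]) (simp add: A_def B_def)
  qed
  also have "\<dots> \<le> measure_pmf.expectation ?PA
      (\<lambda>f. \<Prod>x\<in>A. exp (real (N - 1) * p * (exp (t * of_bool (f x)) - 1)))"
    unfolding A_def B_def using common_incidences_mgf_given_row[OF assms]
    by (intro integral_mono) (auto simp: integrable_measure_pmf_finite finite_set_Pi_pmf)
  also have "\<dots> = (\<Prod>x\<in>A. exp (real (N - 1) * p * (exp t - 1)) * p + 1 * (1 - p))"
    by (subst expectation_prod_Pi_bernoulli[where h = "\<lambda>x b. exp (real (N - 1) * p * (exp (t * of_bool b) - 1))"])
       (auto simp: finA assms)
  also have "\<dots> = (1 - p + p * exp (real (N - 1) * p * (exp t - 1))) ^ m"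
    by (simp add: A_def card_cartesian_product algebra_simps)
  finally show ?thesis .
qed

lemma prob_no_common_aux:
  assumes "v < N" "w < N" "w \<noteq> v" "0 \<le> p" "p \<le> 1"
  shows "measure_pmf.expectation (rig_edges m N p) (\<lambda>G. of_bool (\<forall>a<m. \<not> (G (v, a) \<and> G (w, a))))
     = (1 - p\<^sup>2) ^ m"
proof -
  define A where "A = {v}\<times>{..<m}"
  define B where "B = ({..<N}-{v})\<times>{..<m}"
  let ?PA = "Pi_pmf A False (\<lambda>_. bernoulli_pmf p)"
  let ?PB = "Pi_pmf B False (\<lambda>_. bernoulli_pmf p)"
  have finA: "finite A" and finB: "finite B" by (auto simp: A_def B_def)
  have w_row: "w \<in> {..<N}-{v}" using assms by auto
  have event: "(of_bool (\<forall>a<m. \<not> (glue A (f, g) (v, a) \<and> glue A (f, g) (w, a))) :: real) =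
              (\<Prod>x\<in>B. if fst x = w \<and> f (v, snd x) \<and> g x then 0 else 1)" for f g
  proof -
    have "(of_bool (\<forall>a<m. \<not> (glue A (f, g) (v, a) \<and> glue A (f, g) (w, a))) :: real)
       = (\<Prod>a<m. if f (v, a) \<and> g (w, a) then 0 else 1)"
      unfolding of_bool_all_less_eq_prod using assms(3)
      by (intro prod.cong refl) (auto simp: glue_def A_def)
    also have "\<dots> = (\<Prod>x\<in>B. if fst x = w \<and> (f (v, snd x) \<and> g (w, snd x)) then 0 else 1)"
      unfolding B_def by (rule prod_times_row[OF _ _ w_row, symmetric]) auto
    also have "\<dots> = (\<Prod>x\<in>B. if fst x = w \<and> f (v, snd x) \<and> g x then 0 else 1)"
      by (intro prod.cong refl) auto
    finally show ?thesis .
  qed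
  have given_row: "measure_pmf.expectation ?PB (\<lambda>g. \<Prod>x\<in>B. if fst x = w \<and> f (v, snd x) \<and> g x then 0 else 1)
      = (\<Prod>x\<in>A. if f x then 1 - p else 1)" for f
  proof -
    have "measure_pmf.expectation ?PB (\<lambda>g. \<Prod>x\<in>B. if fst x = w \<and> f (v, snd x) \<and> g x then 0 else 1)
       = (\<Prod>x\<in>B. if fst x = w \<and> f (v, snd x) then 1 - p else 1)"
      by (subst expectation_prod_Pi_bernoulli
          [where h = "\<lambda>x b. if fst x = w \<and> f (v, snd x) \<and> b then 0 else 1"])
         (auto simp: finB assms intro!: prod.cong)
    also have "\<dots> = (\<Prod>x\<in>A. if f x then 1 - p else 1)"
      unfolding B_def A_def by (subst prod_times_row[OF _ _ w_row]) (auto simp: prod_singleton_times)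
    finally show ?thesis .
  qed
  have "measure_pmf.expectation (rig_edges m N p) (\<lambda>G. of_bool (\<forall>a<m. \<not> (G (v, a) \<and> G (w, a))))
    = measure_pmf.expectation ?PA (\<lambda>f. \<Prod>x\<in>A. if f x then 1 - p else 1)"
    unfolding A_def B_def
    by (subst expectation_rig_edges_split[OF assms(1)])
       (simp only: event[unfolded A_def B_def] given_row[unfolded A_def B_def])
  also have "\<dots> = (\<Prod>x\<in>A. (1 - p) * p + 1 * (1 - p))"
    by (subst expectation_prod_Pi_bernoulli[where h = "\<lambda>x b. if b then 1 - p else 1"])
       (auto simp: finA assms)
  also have "\<dots> = (1 - p\<^sup>2) ^ m"
    by (simp add: A_def card_cartesian_product algebra_simps power2_eq_square)
  finally show ?thesis .
qed

lemma rig_degree_mean: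
  assumes "v < N" "0 \<le> p" "p \<le> 1"
  shows "measure_pmf.expectation (rig_edges m N p) (\<lambda>G. real (rig_degree m N G v))
     = real (N - 1) * (1 - (1 - p\<^sup>2) ^ m)"
proof -
  have deg: "real (rig_degree m N G v) =
     (\<Sum>w\<in>{..<N}-{v}. 1 - of_bool (\<forall>a<m. \<not> (G (v, a) \<and> G (w, a))))" for G
  proof -
    have "(\<Sum>w\<in>{..<N}-{v}. 1 - (of_bool (\<forall>a<m. \<not> (G (v, a) \<and> G (w, a))) :: real)) =
          (\<Sum>w\<in>{..<N}-{v}. of_bool (\<exists>a<m. G (v, a) \<and> G (w, a)))"
      by (intro sum.cong refl) auto
    also have "\<dots> = real (card (({..<N}-{v}) \<inter> {w. \<exists>a<m. G (v, a) \<and> G (w, a)}))"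
      by simp
    also have "({..<N}-{v}) \<inter> {w. \<exists>a<m. G (v, a) \<and> G (w, a)} = {w\<in>{..<N}. rig_adj m G v w}"
      by (auto simp: rig_adj_def)
    finally show ?thesis by (simp add: rig_degree_def)
  qed
  have "measure_pmf.expectation (rig_edges m N p) (\<lambda>G. real (rig_degree m N G v)) =
     (\<Sum>w\<in>{..<N}-{v}. 1 - measure_pmf.expectation (rig_edges m N p)
        (\<lambda>G. of_bool (\<forall>a<m. \<not> (G (v, a) \<and> G (w, a)))))"
    unfolding deg
    by (subst Bochner_Integration.integral_sum)
       (auto simp: integrable_measure_pmf_finite finite_set_rig_edges intro!: sum.cong
         simp del: of_bool_conj)
  also have "\<dots> = (\<Sum>w\<in>{..<N}-{v}. 1 - (1 - p\<^sup>2) ^ m)"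
    using assms by (intro sum.cong refl, subst prob_no_common_aux) auto
  also have "\<dots> = real (N - 1) * (1 - (1 - p\<^sup>2) ^ m)" using assms by simp
  finally show ?thesis .
qed


section \<open>Moment bounds in the sparse regime\<close>

text \<open>The exponent \<open>\<Phi>(t) = \<beta>\<gamma>(exp(\<gamma>(e\<^sup>t - 1)) - 1)\<close> of the upper bound on the moment
  generating function of a degree; note \<open>\<Phi>(0) = 0\<close> and \<open>\<Phi>'(0) = \<beta>\<gamma>\<^sup>2\<close>.\<close>
definition degree_mgf_exponent :: "real \<Rightarrow> real \<Rightarrow> real \<Rightarrow> real" where
  "degree_mgf_exponent \<beta> \<gamma> t = \<beta> * \<gamma> * (exp (\<gamma> * (exp t - 1)) - 1)"

text \<open>Parameters \<open>m, N, p\<close> for which each vertex expects at most \<open>\<gamma>\<close> neighbours per auxiliary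
  vertex, at most \<open>\<beta>\<gamma>\<close> auxiliary neighbours, and (by \<open>rig_degree_mean\<close>) at least \<open>L\<close>
  neighbours in total.\<close>
definition sparse_regime :: "real \<Rightarrow> real \<Rightarrow> real \<Rightarrow> nat \<Rightarrow> nat \<Rightarrow> real \<Rightarrow> bool" where
  "sparse_regime \<beta> \<gamma> L m N p \<longleftrightarrow> 0 < N \<and> 0 \<le> p \<and> p \<le> 1 \<and> real (N - 1) * p \<le> \<gamma> \<and>
     real m * p \<le> \<beta> * \<gamma> \<and> L \<le> real (N - 1) * (1 - (1 - p\<^sup>2) ^ m)"

lemma mgf_bound_le_exp:
  fixes p \<beta> \<gamma> t :: real
  assumes "0 \<le> p" "p \<le> 1" "real (N - 1) * p \<le> \<gamma>" "real m * p \<le> \<beta> * \<gamma>" "t \<ge> 0"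
  shows "(1 - p + p * exp (real (N - 1) * p * (exp t - 1))) ^ m \<le> exp (degree_mgf_exponent \<beta> \<gamma> t)"
proof -
  define R where "R = exp (\<gamma> * (exp t - 1))"
  define E where "E = exp (real (N - 1) * p * (exp t - 1))"
  have et: "exp t - 1 \<ge> 0" using assms(5) by simp
  have E1: "E \<ge> 1" unfolding E_def using et assms(1) by simp
  have ER: "E \<le> R" unfolding E_def R_def using mult_right_mono[OF assms(3) et] by simp
  have R1: "R \<ge> 1" using E1 ER by simp
  have b0: "0 \<le> 1 - p + p * E" using assms(1,2) E1 by (intro add_nonneg_nonneg mult_nonneg_nonneg) auto
  have "p * E \<le> p * R" using ER assms(1) by (rule mult_left_mono)
  hence "1 - p + p * E \<le> 1 + p * (R - 1)" by (simp add: algebra_simps)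
  also have "\<dots> \<le> exp (p * (R - 1))" by (rule exp_ge_add_one_self)
  finally have "(1 - p + p * E) ^ m \<le> exp (p * (R - 1)) ^ m" using b0 by (intro power_mono) auto
  also have "\<dots> = exp (real m * p * (R - 1))" by (simp add: exp_of_nat_mult[symmetric] mult.assoc)
  also have "\<dots> \<le> exp (\<beta> * \<gamma> * (R - 1))" using mult_right_mono[OF assms(4), of "R - 1"] R1 by simp
  finally show ?thesis by (simp add: E_def R_def degree_mgf_exponent_def)
qed

lemma rig_degree_mgf_le:
  assumes "sparse_regime \<beta> \<gamma> L m N p" "v < N" "t \<ge> 0"
  shows "measure_pmf.expectation (rig_edges m N p) (\<lambda>G. exp (t * real (rig_degree m N G v)))
     \<le> exp (degree_mgf_exponent \<beta> \<gamma> t)"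
  using assms order.trans[OF rig_degree_mgf mgf_bound_le_exp]
  by (auto simp: sparse_regime_def)

lemma D_pmf_mgf_le:
  assumes "sparse_regime \<beta> \<gamma> L m N p" "t \<ge> 0"
  shows "measure_pmf.expectation (D_pmf m N p) (\<lambda>x. exp (t * real x)) \<le> exp (degree_mgf_exponent \<beta> \<gamma> t)"
  using assms by (intro expectation_D_pmf_le rig_degree_mgf_le) (auto simp: sparse_regime_def)

text \<open>The second moment of a degree is controlled through \<open>y\<^sup>2 \<le> 2 e\<^sup>y\<close>.\<close>
lemma D_pmf_neg_mgf_le:
  assumes "sparse_regime \<beta> \<gamma> L m N p" "t \<ge> 0"
  shows "measure_pmf.expectation (D_pmf m N p) (\<lambda>x. exp (- t * real x))
     \<le> exp (- t * L + t\<^sup>2 / 2 * (2 * exp (degree_mgf_exponent \<beta> \<gamma> 1)))"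
proof (rule expectation_D_pmf_le)
  show "N > 0" using assms(1) by (simp add: sparse_regime_def)
next
  fix v assume v: "v < N"
  let ?d = "\<lambda>G. real (rig_degree m N G v)"
  let ?E = "measure_pmf.expectation (rig_edges m N p)"
  have int: "integrable (rig_edges m N p) f" for f :: "_ \<Rightarrow> real"
    by (simp add: integrable_measure_pmf_finite finite_set_rig_edges)
  have "?E (\<lambda>G. (?d G)\<^sup>2) \<le> ?E (\<lambda>G. 2 * exp (1 * ?d G))"
  proof (intro integral_mono int)
    fix G
    show "(?d G)\<^sup>2 \<le> 2 * exp (1 * ?d G)"
      using exp_lower_Taylor_quadratic[of "?d G"] by simp
  qed
  also have "\<dots> \<le> 2 * exp (degree_mgf_exponent \<beta> \<gamma> 1)"
    using rig_degree_mgf_le[OF assms(1) v, of 1] by simp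
  finally have second_moment: "?E (\<lambda>G. (?d G)\<^sup>2) \<le> 2 * exp (degree_mgf_exponent \<beta> \<gamma> 1)" .
  have "L \<le> ?E ?d"
    using assms(1) by (subst rig_degree_mean[OF v]) (auto simp: sparse_regime_def)
  thus "?E (\<lambda>G. exp (- t * ?d G)) \<le> exp (- t * L + t\<^sup>2 / 2 * (2 * exp (degree_mgf_exponent \<beta> \<gamma> 1)))"
    using second_moment assms(2) by (intro expectation_exp_neg_le finite_set_rig_edges) auto
qed


section \<open>The two tails\<close>

text \<open>Since \<open>\<Phi>(0) = 0\<close> and \<open>\<Phi>'(0) = \<mu> < (1 + \<delta>)\<mu>\<close>, the Chernoff exponent is negative for
  small \<open>t > 0\<close>.\<close>
lemma upper_tail_rate:
  assumes "\<beta> > 0" "\<gamma> > 0" "\<delta> > 0"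
  shows "\<exists>t>0. degree_mgf_exponent \<beta> \<gamma> t - t * ((1 + \<delta>) * (\<beta> * \<gamma>\<^sup>2)) < 0"
proof -
  define \<psi> where "\<psi> = (\<lambda>t. degree_mgf_exponent \<beta> \<gamma> t - t * ((1 + \<delta>) * (\<beta> * \<gamma>\<^sup>2)))"
  have "DERIV \<psi> 0 :> \<beta> * \<gamma> * (exp (\<gamma> * (exp 0 - 1)) * (\<gamma> * exp 0)) - (1 + \<delta>) * (\<beta> * \<gamma>\<^sup>2)"
    unfolding \<psi>_def degree_mgf_exponent_def by (auto intro!: derivative_eq_intros)
  hence deriv: "DERIV \<psi> 0 :> - (\<delta> * (\<beta> * \<gamma>\<^sup>2))"
    by (simp add: power2_eq_square algebra_simps)
  have "- (\<delta> * (\<beta> * \<gamma>\<^sup>2)) < 0" using assms by simp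
  then obtain d where d: "d > 0" and decreasing: "\<forall>h>0. h < d \<longrightarrow> \<psi> 0 > \<psi> (0 + h)"
    using DERIV_neg_dec_right[OF deriv] by blast
  have "\<psi> (d / 2) < \<psi> 0" using decreasing d by simp
  also have "\<psi> 0 = 0" by (simp add: \<psi>_def degree_mgf_exponent_def)
  finally show ?thesis using d by (intro exI[of _ "d / 2"]) (simp add: \<psi>_def)
qed

lemma upper_tail_bound:
  assumes "\<beta> > 0" "\<gamma> > 0" "\<delta> > 0"
  shows "\<exists>C>0. \<forall>m N p k. sparse_regime \<beta> \<gamma> L m N p \<longrightarrow>
           measure_pmf.prob (iid_sum_pmf k (D_pmf m N p))
             {x. real x \<ge> (1 + \<delta>) * (\<beta> * \<gamma>\<^sup>2) * real k} \<le> exp (- C * real k)"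
proof -
  let ?a = "(1 + \<delta>) * (\<beta> * \<gamma>\<^sup>2)"
  obtain t where t: "t > 0" and rate: "degree_mgf_exponent \<beta> \<gamma> t - t * ?a < 0"
    using upper_tail_rate[OF assms] by blast
  have "measure_pmf.prob (iid_sum_pmf k (D_pmf m N p)) {x. real x \<ge> ?a * real k}
          \<le> exp (- (t * ?a - degree_mgf_exponent \<beta> \<gamma> t) * real k)"
    if "sparse_regime \<beta> \<gamma> L m N p" for m N p k
  proof (rule iid_sum_pmf_tail[OF finite_set_D_pmf])
    show "t * ?a * real k \<le> t * real x" if "x \<in> {x. real x \<ge> ?a * real k}" for x
      using that t by (simp add: mult.assoc mult_left_mono)
    have "measure_pmf.expectation (D_pmf m N p) (\<lambda>x. exp (t * real x)) * exp (- t * ?a)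
          \<le> exp (degree_mgf_exponent \<beta> \<gamma> t) * exp (- t * ?a)"
      using D_pmf_mgf_le[OF that] t by (intro mult_right_mono) auto
    thus "measure_pmf.expectation (D_pmf m N p) (\<lambda>x. exp (t * real x)) * exp (- t * ?a)
          \<le> exp (- (t * ?a - degree_mgf_exponent \<beta> \<gamma> t))"
      by (simp add: exp_add[symmetric])
  qed
  thus ?thesis using rate by (intro exI[of _ "t * ?a - degree_mgf_exponent \<beta> \<gamma> t"]) auto
qed

text \<open>For the lower tail the mean must exceed \<open>(1 - \<delta>/2)\<mu>\<close>; with \<open>K = 2 exp (\<Phi> 1)\<close> the choice
  \<open>t = \<delta>\<mu>/(2K)\<close> yields the rate \<open>(\<delta>\<mu>)\<^sup>2/(8K)\<close>.\<close>
lemma lower_tail_bound: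
  assumes "\<beta> > 0" "\<gamma> > 0" "\<delta> > 0"
  shows "\<exists>C>0. \<forall>m N p k. sparse_regime \<beta> \<gamma> ((1 - \<delta> / 2) * (\<beta> * \<gamma>\<^sup>2)) m N p \<longrightarrow>
           measure_pmf.prob (iid_sum_pmf k (D_pmf m N p))
             {x. real x \<le> (1 - \<delta>) * (\<beta> * \<gamma>\<^sup>2) * real k} \<le> exp (- C * real k)"
proof -
  define \<mu> where "\<mu> = \<beta> * \<gamma>\<^sup>2"
  define K where "K = 2 * exp (degree_mgf_exponent \<beta> \<gamma> 1)"
  define t where "t = \<delta> * \<mu> / (2 * K)"
  define C where "C = (\<delta> * \<mu>)\<^sup>2 / (8 * K)"
  have K: "K > 0" by (simp add: K_def)
  have t: "t > 0" and C: "C > 0" using K assms by (simp_all add: t_def C_def \<mu>_def)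
  have rate: "- t * ((1 - \<delta> / 2) * \<mu>) + t\<^sup>2 / 2 * K + t * ((1 - \<delta>) * \<mu>) = - C"
    unfolding t_def C_def using K by (simp add: field_simps power2_eq_square)
  have "measure_pmf.prob (iid_sum_pmf k (D_pmf m N p)) {x. real x \<le> (1 - \<delta>) * \<mu> * real k}
          \<le> exp (- C * real k)"
    if "sparse_regime \<beta> \<gamma> ((1 - \<delta> / 2) * \<mu>) m N p" for m N p k
  proof (rule iid_sum_pmf_tail[OF finite_set_D_pmf, where t = "- t"])
    show "- t * ((1 - \<delta>) * \<mu>) * real k \<le> - t * real x" if "x \<in> {x. real x \<le> (1 - \<delta>) * \<mu> * real k}" for x
      using that t by (simp add: mult.assoc mult_left_mono)
    have "measure_pmf.expectation (D_pmf m N p) (\<lambda>x. exp (- t * real x)) * exp (t * ((1 - \<delta>) * \<mu>))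
          \<le> exp (- t * ((1 - \<delta> / 2) * \<mu>) + t\<^sup>2 / 2 * K) * exp (t * ((1 - \<delta>) * \<mu>))"
      using D_pmf_neg_mgf_le[OF that] t unfolding K_def by (intro mult_right_mono) auto
    also have "\<dots> = exp (- C)" by (simp only: exp_add[symmetric] rate)
    finally show "measure_pmf.expectation (D_pmf m N p) (\<lambda>x. exp (- t * real x))
        * exp (- (- t) * ((1 - \<delta>) * \<mu>)) \<le> exp (- C)" by simp
  qed
  thus ?thesis using C unfolding \<mu>_def by blast
qed


section \<open>The parameters of the theorem\<close>

text \<open>For \<open>p = \<gamma>/n\<close> the mean degree is at least the quantity on the left, which tends
  to \<open>\<mu>\<close>; it uses \<open>(1 - q)\<^sup>m \<le> exp (- m q) \<le> 1 - m q + (m q)\<^sup>2/2\<close>.\<close>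
lemma rig_mean_degree_lower:
  fixes \<beta> \<gamma> :: real
  assumes "N \<ge> 1" "n > 0" "\<gamma> / real n \<le> 1" "\<gamma> > 0" "real m \<le> \<beta> * real n"
  shows "(real N / real n - 1 / real n) * (real m / real n) * \<gamma>\<^sup>2 * (1 - (\<beta> * \<gamma>\<^sup>2 / 2) / real n)
     \<le> real (N - 1) * (1 - (1 - (\<gamma> / real n)\<^sup>2) ^ m)"
proof -
  define q where "q = (\<gamma> / real n)\<^sup>2"
  define x where "x = real m * q"
  have q0: "q \<ge> 0" and q1: "q \<le> 1" unfolding q_def using assms(3,4)
    by (auto simp: power_le_one)
  have x0: "x \<ge> 0" unfolding x_def using q0 by simp
  have xle: "x \<le> \<beta> * \<gamma>\<^sup>2 / real n"
  proof -
    have "x = real m * \<gamma>\<^sup>2 / (real n)\<^sup>2" by (simp add: x_def q_def power_divide)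
    also have "\<dots> \<le> \<beta> * real n * \<gamma>\<^sup>2 / (real n)\<^sup>2"
      using assms(5) by (intro divide_right_mono mult_right_mono) auto
    also have "\<dots> = \<beta> * \<gamma>\<^sup>2 / real n" using assms(2) by (simp add: power2_eq_square)
    finally show ?thesis .
  qed
  have "(1 - q) ^ m \<le> exp (- q) ^ m"
    using q1 exp_ge_add_one_self[of "- q"] by (intro power_mono) auto
  also have "\<dots> = exp (- x)" by (simp add: x_def exp_of_nat_mult[symmetric])
  also have "\<dots> \<le> 1 - x + x\<^sup>2 / 2" by (rule exp_neg_le_quadratic[OF x0])
  finally have h1: "x * (1 - x / 2) \<le> 1 - (1 - q) ^ m" by (simp add: power2_eq_square algebra_simps)
  have h2: "x * (1 - (\<beta> * \<gamma>\<^sup>2 / 2) / real n) \<le> x * (1 - x / 2)"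
    using xle x0 by (intro mult_left_mono) auto
  have N1: "real (N - 1) = real N - 1" using assms(1) by simp
  have eq: "(real N / real n - 1 / real n) * (real m / real n) * \<gamma>\<^sup>2 = real (N - 1) * x"
    unfolding N1 x_def q_def using assms(2) by (simp add: field_simps power2_eq_square)
  have "(real N / real n - 1 / real n) * (real m / real n) * \<gamma>\<^sup>2 * (1 - (\<beta> * \<gamma>\<^sup>2 / 2) / real n)
      = real (N - 1) * (x * (1 - (\<beta> * \<gamma>\<^sup>2 / 2) / real n))" by (subst eq) (simp only: mult.assoc)
  also have "\<dots> \<le> real (N - 1) * (1 - (1 - q) ^ m)"
    using h1 h2 by (intro mult_left_mono) auto
  finally show ?thesis by (simp add: q_def)
qed

lemma eventually_sparse_regime:
  fixes \<beta> \<gamma> \<delta> :: real and n' n'' :: "nat \<Rightarrow> nat"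
  assumes "\<beta> > 0" and "\<gamma> > 0" and "\<delta> > 0"
    and "eventually (\<lambda>n. n' n > 0 \<and> n'' n > 0 \<and>
            real (n' n) \<le> of_int \<lfloor>\<beta> * real n\<rfloor> \<and> n'' n \<le> n) at_top"
    and "((\<lambda>n. real (n' n) / real n) \<longlongrightarrow> \<beta>) at_top"
    and "((\<lambda>n. real (n'' n) / real n) \<longlongrightarrow> 1) at_top"
  shows "eventually (\<lambda>n. sparse_regime \<beta> \<gamma> ((1 - \<delta> / 2) * (\<beta> * \<gamma>\<^sup>2)) (n' n) (n'' n) (\<gamma> / real n))
           at_top"
proof -
  define s where "s = (\<lambda>n. (real (n'' n) / real n - 1 / real n) * (real (n' n) / real n) * \<gamma>\<^sup>2
        * (1 - (\<beta> * \<gamma>\<^sup>2 / 2) / real n))"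
  have "(s \<longlongrightarrow> (1 - 0) * \<beta> * \<gamma>\<^sup>2 * (1 - 0)) at_top"
    unfolding s_def by (intro tendsto_intros assms(5,6))
  hence "(s \<longlongrightarrow> \<beta> * \<gamma>\<^sup>2) at_top" by simp
  hence "eventually (\<lambda>n. (1 - \<delta> / 2) * (\<beta> * \<gamma>\<^sup>2) < s n) at_top"
    by (rule order_tendstoD(1)) (use assms in simp)
  moreover have "eventually (\<lambda>n::nat. n \<ge> nat \<lceil>\<gamma>\<rceil> + 1) at_top" by (rule eventually_ge_at_top)
  ultimately show ?thesis using assms(4)
  proof eventually_elim
    case (elim n)
    have n: "n > 0" and \<gamma>_le: "\<gamma> \<le> real n" using elim(2) by linarith+
    have m: "real (n' n) \<le> \<beta> * real n" using elim(3) of_int_floor_le order.trans by blast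
    have p: "0 \<le> \<gamma> / real n" "\<gamma> / real n \<le> 1" using n \<gamma>_le assms(2) by auto
    have "real (n'' n - 1) * (\<gamma> / real n) \<le> real n * (\<gamma> / real n)"
      using elim(3) assms(2) by (intro mult_right_mono) auto
    moreover have "real (n' n) * (\<gamma> / real n) \<le> \<beta> * real n * (\<gamma> / real n)"
      using m assms(2) by (intro mult_right_mono) auto
    moreover have "s n \<le> real (n'' n - 1) * (1 - (1 - (\<gamma> / real n)\<^sup>2) ^ n' n)"
      unfolding s_def using elim(3) n p assms(2) m by (intro rig_mean_degree_lower) auto
    ultimately show ?case using elim(1,3) n p by (simp add: sparse_regime_def)
  qed
qed


theorem lemma2:
  fixes \<beta> \<gamma> \<delta> :: real and n' n'' :: "nat \<Rightarrow> nat"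
  assumes "\<beta> > 0" and "\<gamma> > 0" and "\<delta> > 0"
    and "eventually (\<lambda>n. n' n > 0 \<and> n'' n > 0 \<and>
            real (n' n) \<le> of_int \<lfloor>\<beta> * real n\<rfloor> \<and> n'' n \<le> n) at_top"
    and "((\<lambda>n. real (n' n) / real n) \<longlongrightarrow> \<beta>) at_top"
    and "((\<lambda>n. real (n'' n) / real n) \<longlongrightarrow> 1) at_top"
  shows "\<exists>C>0. \<exists>N0::nat. \<forall>n\<ge>N0. \<forall>k::nat\<ge>1.
           measure_pmf.prob (iid_sum_pmf k (D_pmf (n' n) (n'' n) (\<gamma> / real n)))
              {x. real x \<ge> (1 + \<delta>) * (\<beta> * \<gamma>\<^sup>2) * real k} \<le> exp (- C * real k)
         \<and> measure_pmf.prob (iid_sum_pmf k (D_pmf (n' n) (n'' n) (\<gamma> / real n)))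
              {x. real x \<le> (1 - \<delta>) * (\<beta> * \<gamma>\<^sup>2) * real k} \<le> exp (- C * real k)"
proof -
  let ?L = "(1 - \<delta> / 2) * (\<beta> * \<gamma>\<^sup>2)"
  obtain C1 where C1: "C1 > 0" and upper: "\<And>m N p k. sparse_regime \<beta> \<gamma> ?L m N p \<Longrightarrow>
      measure_pmf.prob (iid_sum_pmf k (D_pmf m N p))
        {x. real x \<ge> (1 + \<delta>) * (\<beta> * \<gamma>\<^sup>2) * real k} \<le> exp (- C1 * real k)"
    using upper_tail_bound[OF assms(1-3)] by blast
  obtain C2 where C2: "C2 > 0" and lower: "\<And>m N p k. sparse_regime \<beta> \<gamma> ?L m N p \<Longrightarrow>
      measure_pmf.prob (iid_sum_pmf k (D_pmf m N p))
        {x. real x \<le> (1 - \<delta>) * (\<beta> * \<gamma>\<^sup>2) * real k} \<le> exp (- C2 * real k)"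
    using lower_tail_bound[OF assms(1-3)] by blast
  obtain N0 where N0: "\<And>n. n \<ge> N0 \<Longrightarrow> sparse_regime \<beta> \<gamma> ?L (n' n) (n'' n) (\<gamma> / real n)"
    using eventually_sparse_regime[OF assms] unfolding eventually_at_top_linorder by blast
  have weaker: "exp (- C * real k) \<le> exp (- min C1 C2 * real k)" if "C \<in> {C1, C2}" for C k
    using that by (auto intro: mult_right_mono)
  show ?thesis
    using C1 C2 N0 order.trans[OF upper weaker] order.trans[OF lower weaker]
    by (intro exI[of _ "min C1 C2"] conjI exI[of _ N0]) auto
qed

end
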